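(* Every tree with more than two vertices is a skeleton.
   Context: For simple graphs $G$ and $H$, $H$ is a skeletal of $G$ if there is a surjective map $\phi:V(G)\to V(H)$ such that for all distinct vertices $a,b$ of $G$: $a$ and $b$ are adjacent in $G$ if and only if $\phi(a)=\phi(b)$ or $\phi(a)$ and $\phi(b)$ are adjacent in $H$. A skeletal $H$ of $G$ under $\phi$ is proper if $|\phi^{-1}(v)|\ge 2$ for at least one vertex $v$ of $H$. A graph is a skeleton if it has no proper skeletal. *)

theory Defs
  imports Main
begin

definition simple_graph :: "'a set \<Rightarrow> ('a \<Rightarrow> 'a \<Rightarrow> bool) \<Rightarrow> bool" where
  "simple_graph V E \<longleftrightarrow> finite V \<and> (\<forall>a b. E a b \<longrightarrow> a \<in> V \<and> b \<in> V)
     \<and> (\<forall>a b. E a b \<longrightarrow> E b a) \<and> (\<forall>a. \<not> E a a)"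

definition connected_graph :: "'a set \<Rightarrow> ('a \<Rightarrow> 'a \<Rightarrow> bool) \<Rightarrow> bool" where
  "connected_graph V E \<longleftrightarrow> V \<noteq> {} \<and> (\<forall>x\<in>V. \<forall>y\<in>V. E\<^sup>*\<^sup>* x y)"

definition has_cycle :: "'a set \<Rightarrow> ('a \<Rightarrow> 'a \<Rightarrow> bool) \<Rightarrow> bool" where
  "has_cycle V E \<longleftrightarrow> (\<exists>cs. length cs \<ge> 3 \<and> distinct cs \<and> set cs \<subseteq> V
      \<and> (\<forall>i. Suc i < length cs \<longrightarrow> E (cs ! i) (cs ! Suc i)) \<and> E (last cs) (hd cs))"

definition is_tree :: "'a set \<Rightarrow> ('a \<Rightarrow> 'a \<Rightarrow> bool) \<Rightarrow> bool" where
  "is_tree V E \<longleftrightarrow> simple_graph V E \<and> connected_graph V E \<and> \<not> has_cycle V E"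

definition is_skeletal :: "'a set \<Rightarrow> ('a \<Rightarrow> 'a \<Rightarrow> bool) \<Rightarrow> 'b set \<Rightarrow> ('b \<Rightarrow> 'b \<Rightarrow> bool)
    \<Rightarrow> ('a \<Rightarrow> 'b) \<Rightarrow> bool" where
  "is_skeletal V E W F \<phi> \<longleftrightarrow> simple_graph W F \<and> \<phi> ` V = W \<and>
     (\<forall>a\<in>V. \<forall>b\<in>V. a \<noteq> b \<longrightarrow> (E a b \<longleftrightarrow> \<phi> a = \<phi> b \<or> F (\<phi> a) (\<phi> b)))"

definition proper_skeletal :: "'a set \<Rightarrow> ('a \<Rightarrow> 'a \<Rightarrow> bool) \<Rightarrow> 'b set \<Rightarrow> ('b \<Rightarrow> 'b \<Rightarrow> bool)
    \<Rightarrow> ('a \<Rightarrow> 'b) \<Rightarrow> bool" where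
  "proper_skeletal V E W F \<phi> \<longleftrightarrow> is_skeletal V E W F \<phi> \<and>
     (\<exists>v\<in>W. card {a\<in>V. \<phi> a = v} \<ge> 2)"

end

theory Submission
  imports Defs
begin

text \<open>Two vertices identified by a proper skeletal map are adjacent and have the same
  neighbours elsewhere (true twins). In a connected graph with a third vertex, some edge
  leaves the pair; its endpoint outside is then adjacent to both twins, giving a triangle,
  which a tree cannot contain.\<close>

definition true_twins :: "'a set \<Rightarrow> ('a \<Rightarrow> 'a \<Rightarrow> bool) \<Rightarrow> 'a \<Rightarrow> 'a \<Rightarrow> bool" where
  "true_twins V E a b \<longleftrightarrow> a \<in> V \<and> b \<in> V \<and> a \<noteq> b \<and> E a b \<and>
     (\<forall>c\<in>V - {a, b}. E a c \<longleftrightarrow> E b c)"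

lemma proper_skeletal_true_twins:
  assumes "proper_skeletal V E W F \<phi>"
  obtains a b where "true_twins V E a b"
proof -
  have sk: "\<forall>a\<in>V. \<forall>b\<in>V. a \<noteq> b \<longrightarrow> (E a b \<longleftrightarrow> \<phi> a = \<phi> b \<or> F (\<phi> a) (\<phi> b))"
    using assms unfolding proper_skeletal_def is_skeletal_def by auto
  obtain v where "card {x\<in>V. \<phi> x = v} \<ge> 2"
    using assms unfolding proper_skeletal_def by auto
  then obtain a b where ab: "a \<in> V" "b \<in> V" "a \<noteq> b" "\<phi> a = \<phi> b"
    using card_le_Suc0_iff_eq[of "{x\<in>V. \<phi> x = v}"] card.infinite by force
  have "true_twins V E a b"
    unfolding true_twins_def using sk ab by (metis Diff_iff insertCI)
  then show thesis by (rule that)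
qed

lemma rtranclp_exit_edge:
  assumes "R\<^sup>*\<^sup>* x y" "x \<in> S" "y \<notin> S"
  shows "\<exists>u\<in>S. \<exists>c. c \<notin> S \<and> R u c"
  using assms by (induction rule: rtranclp_induct) blast+

lemma connected_graph_exit_edge:
  assumes "connected_graph V E" "x \<in> S" "S \<subseteq> V" "\<not> V \<subseteq> S"
  shows "\<exists>u\<in>S. \<exists>c. c \<notin> S \<and> E u c"
proof -
  obtain y where "y \<in> V" "y \<notin> S" using assms(4) by blast
  moreover have "E\<^sup>*\<^sup>* x y"
    using assms(1-3) \<open>y \<in> V\<close> unfolding connected_graph_def by blast
  ultimately show ?thesis using rtranclp_exit_edge assms(2) by metis
qed

lemma triangle_has_cycle:
  assumes "simple_graph V E" "a \<in> V" "b \<in> V" "c \<in> V" "distinct [a, b, c]"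
    and "E a b" "E b c" "E a c"
  shows "has_cycle V E"
  unfolding has_cycle_def
proof (intro exI[of _ "[a, b, c]"] conjI allI impI)
  fix i assume "Suc i < length [a, b, c]"
  then have "i = 0 \<or> i = 1" by auto
  then show "E ([a, b, c] ! i) ([a, b, c] ! Suc i)" using assms(6,7) by auto
next
  show "E (last [a, b, c]) (hd [a, b, c])"
    using assms(1,8) unfolding simple_graph_def by simp
qed (use assms(2-5) in auto)

lemma true_twins_has_cycle:
  assumes "simple_graph V E" "connected_graph V E" "card V > 2" "true_twins V E a b"
  shows "has_cycle V E"
proof -
  have twins: "a \<in> V" "b \<in> V" "a \<noteq> b" "E a b" "\<forall>c\<in>V - {a, b}. E a c \<longleftrightarrow> E b c"
    using assms(4) unfolding true_twins_def by auto
  have "card {a, b} \<le> 2" by (simp add: card_insert_if)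
  then have "\<not> V \<subseteq> {a, b}"
    using assms(3) card_mono[of "{a, b}" V] by auto
  then obtain u c where "u \<in> {a, b}" "c \<notin> {a, b}" "E u c"
    using connected_graph_exit_edge[OF assms(2), of a "{a, b}"] twins(1,2) by blast
  moreover have "c \<in> V"
    using \<open>E u c\<close> assms(1) unfolding simple_graph_def by blast
  ultimately have "E a c" "E b c" using twins(5) by auto
  moreover have "distinct [a, b, c]" using twins(3) \<open>c \<notin> {a, b}\<close> by auto
  ultimately show ?thesis
    using triangle_has_cycle[OF assms(1) twins(1,2) \<open>c \<in> V\<close>] twins(4) by blast
qed

theorem mainTheorem4:
  fixes V :: "'a set" and E :: "'a \<Rightarrow> 'a \<Rightarrow> bool"
  assumes "is_tree V E" and "card V > 2"
  shows "\<not> (\<exists>(W :: 'b set) F \<phi>. proper_skeletal V E W F \<phi>)"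
proof
  assume "\<exists>(W :: 'b set) F \<phi>. proper_skeletal V E W F \<phi>"
  then obtain a b where twins: "true_twins V E a b"
    using proper_skeletal_true_twins by metis
  have tree: "simple_graph V E" "connected_graph V E" "\<not> has_cycle V E"
    using assms(1) unfolding is_tree_def by auto
  show False
    using true_twins_has_cycle[OF tree(1,2) assms(2) twins] tree(3) by contradiction
qed

end
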